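(* On $\mathcal M_{\mathcal G,\Gamma}$ the metric $$\mathrm w_{\mathcal G,\Gamma}(T,S)=\mathrm a_{\mathcal G}(T,S)+\sup_{g\in\Gamma}\mathrm a(T^g,S^g)$$ induces the same topology as the metric $\mathrm m_{\mathcal G,\Gamma}$ (the leash topology).
   Context: $(X,\Sigma,\mu)$ is a separable Lebesgue space with a non-atomic probability measure $\mu$. $\mathcal A$ is the group of invertible measure-preserving transformations of $X$, two transformations being identified if they agree outside a null set. Fix a countable family $\{A_i\}_{i\in\mathbb N}\subset\Sigma$ that generates $\Sigma$ and is dense in $\Sigma$ (for every $A\in\Sigma$ and $\varepsilon>0$ there is $i$ with $\mu(A_i\triangle A)<\varepsilon$). For $T,S\in\mathcal A$ put $\mathrm d(T,S)=\sum_{i}2^{-i}\big(\mu(TA_i\triangle SA_i)+\mu(T^{-1}A_i\triangle S^{-1}A_i)\big)$ and $\mathrm a(T,S)=\sum_{i,j}2^{-(i+j)}|\mu(TA_i\cap A_j)-\mu(SA_i\cap A_j)|$. $\mathcal G$ is a Hausdorff locally compact group with a countable neighborhood base. Fix an at most countable family $\{K_i\}$ of compact subsets of $\mathcal G$ with nonempty interiors whose union contains a set generating $\mathcal G$. An action of $\mathcal G$ is a family $T=\{T^g\}_{g\in\mathcal G}\subset\mathcal A$ with $T^gT^h=T^{gh}$ for all $g,h$ and such that $g\mapsto\mu(T^gA\cap B)$ is continuous for all $A,B\in\Sigma$. For actions $T,S$: $\mathrm d_{\mathcal G}(T,S)=\sum_i 2^{-i}\sup_{g\in K_i}\mathrm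 d(T^g,S^g)$ and $\mathrm a_{\mathcal G}(T,S)=\sum_i 2^{-i}\sup_{g\in K_i}\mathrm a(T^g,S^g)$. Let $\Gamma\subset\mathcal G$ be an unbounded subset (not contained in any compact set). An action $T$ is $\Gamma$-mixing if for all $A,B\in\Sigma$ and $\varepsilon>0$ there is a compact $C\subset\mathcal G$ with $|\mu(T^gA\cap B)-\mu(A)\mu(B)|<\varepsilon$ for all $g\in\Gamma\setminus C$. $\mathcal M_{\mathcal G,\Gamma}$ is the set of all $\Gamma$-mixing actions with the leash metric $\mathrm m_{\mathcal G,\Gamma}(T,S)=\mathrm d_{\mathcal G}(T,S)+\sup_{g\in\Gamma}\mathrm a(T^g,S^g)$. *)

theory Defs
  imports "HOL-Probability.Probability"
begin

definition meas_pres :: "'a measure \<Rightarrow> 'b measure \<Rightarrow> ('a \<Rightarrow> 'b) set" where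
  "meas_pres M N = {f. f \<in> measurable M N \<and> distr M N f = N}"

definition lebesgue_space :: "'a measure \<Rightarrow> bool" where
  "lebesgue_space M \<longleftrightarrow>
     (\<exists>f g. f \<in> meas_pres M (lebesgue_on {0..1::real}) \<and>
            g \<in> meas_pres (lebesgue_on {0..1::real}) M \<and>
            (AE x in M. g (f x) = x) \<and> (AE y in lebesgue_on {0..1::real}. f (g y) = y))"

definition non_atomic :: "'a measure \<Rightarrow> bool" where
  "non_atomic M \<longleftrightarrow> (\<forall>A\<in>sets M. measure M A > 0 \<longrightarrow>
      (\<exists>B\<in>sets M. B \<subseteq> A \<and> 0 < measure M B \<and> measure M B < measure M A))"

definition symdiff :: "'a set \<Rightarrow> 'a set \<Rightarrow> 'a set" where
  "symdiff X Y = (X - Y) \<union> (Y - X)"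

definition generates_mod0 :: "'a measure \<Rightarrow> (nat \<Rightarrow> 'a set) \<Rightarrow> bool" where
  "generates_mod0 M A \<longleftrightarrow> (\<forall>B\<in>sets M. \<exists>C\<in>sigma_sets (space M) (range A).
       symdiff B C \<in> null_sets M)"

definition dense_family :: "'a measure \<Rightarrow> (nat \<Rightarrow> 'a set) \<Rightarrow> bool" where
  "dense_family M A \<longleftrightarrow> (\<forall>B\<in>sets M. \<forall>e>0. \<exists>i. measure M (symdiff (A i) B) < e)"

definition mp_aut :: "'a measure \<Rightarrow> ('a \<Rightarrow> 'a) \<Rightarrow> bool" where
  "mp_aut M T \<longleftrightarrow> T \<in> meas_pres M M \<and>
     (\<exists>S\<in>meas_pres M M. (AE x in M. S (T x) = x) \<and> (AE x in M. T (S x) = x))"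

text \<open>The inverse (unique mod 0).\<close>
definition aut_inv :: "'a measure \<Rightarrow> ('a \<Rightarrow> 'a) \<Rightarrow> ('a \<Rightarrow> 'a)" where
  "aut_inv M T = (SOME S. S \<in> meas_pres M M \<and>
       (AE x in M. S (T x) = x) \<and> (AE x in M. T (S x) = x))"

definition aut_img :: "'a measure \<Rightarrow> ('a \<Rightarrow> 'a) \<Rightarrow> 'a set \<Rightarrow> 'a set" where
  "aut_img M T X = aut_inv M T -` X \<inter> space M"

definition aut_pre :: "'a measure \<Rightarrow> ('a \<Rightarrow> 'a) \<Rightarrow> 'a set \<Rightarrow> 'a set" where
  "aut_pre M T X = T -` X \<inter> space M"

definition dist_d :: "'a measure \<Rightarrow> (nat \<Rightarrow> 'a set) \<Rightarrow> ('a \<Rightarrow> 'a) \<Rightarrow> ('a \<Rightarrow> 'a) \<Rightarrow> real" where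
  "dist_d M A T S = (\<Sum>i. (1/2::real)^i *
      (measure M (symdiff (aut_img M T (A i)) (aut_img M S (A i))) +
       measure M (symdiff (aut_pre M T (A i)) (aut_pre M S (A i)))))"

definition dist_a :: "'a measure \<Rightarrow> (nat \<Rightarrow> 'a set) \<Rightarrow> ('a \<Rightarrow> 'a) \<Rightarrow> ('a \<Rightarrow> 'a) \<Rightarrow> real" where
  "dist_a M A T S = (\<Sum>i. \<Sum>j. (1/2::real)^(i+j) *
      \<bar>measure M (aut_img M T (A i) \<inter> A j) - measure M (aut_img M S (A i) \<inter> A j)\<bar>)"

definition generated_subgroup :: "'g::group_add set \<Rightarrow> 'g set" where
  "generated_subgroup X = \<Inter>{H. X \<subseteq> H \<and> 0 \<in> H \<and> (\<forall>x\<in>H. \<forall>y\<in>H. x + y \<in> H) \<and> (\<forall>x\<in>H. - x \<in> H)}"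

text \<open>Actions: the group is written additively (not necessarily commutative).\<close>
definition is_action :: "'a measure \<Rightarrow> ('g::topological_group_add \<Rightarrow> 'a \<Rightarrow> 'a) \<Rightarrow> bool" where
  "is_action M T \<longleftrightarrow> (\<forall>g. mp_aut M (T g)) \<and>
     (\<forall>g h. AE x in M. T (g + h) x = T g (T h x)) \<and>
     (\<forall>X\<in>sets M. \<forall>Y\<in>sets M. continuous_on UNIV (\<lambda>g. measure M (aut_img M (T g) X \<inter> Y)))"

definition dist_dG :: "'a measure \<Rightarrow> (nat \<Rightarrow> 'a set) \<Rightarrow> nat set \<Rightarrow> (nat \<Rightarrow> 'g set)
    \<Rightarrow> ('g \<Rightarrow> 'a \<Rightarrow> 'a) \<Rightarrow> ('g \<Rightarrow> 'a \<Rightarrow> 'a) \<Rightarrow> real" where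
  "dist_dG M A I K T S = (\<Sum>\<^sub>\<infinity>i\<in>I. (1/2::real)^i * (SUP g\<in>K i. dist_d M A (T g) (S g)))"

definition dist_aG :: "'a measure \<Rightarrow> (nat \<Rightarrow> 'a set) \<Rightarrow> nat set \<Rightarrow> (nat \<Rightarrow> 'g set)
    \<Rightarrow> ('g \<Rightarrow> 'a \<Rightarrow> 'a) \<Rightarrow> ('g \<Rightarrow> 'a \<Rightarrow> 'a) \<Rightarrow> real" where
  "dist_aG M A I K T S = (\<Sum>\<^sub>\<infinity>i\<in>I. (1/2::real)^i * (SUP g\<in>K i. dist_a M A (T g) (S g)))"

definition gamma_mixing :: "'a measure \<Rightarrow> 'g::topological_group_add set \<Rightarrow> ('g \<Rightarrow> 'a \<Rightarrow> 'a) \<Rightarrow> bool" where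
  "gamma_mixing M \<Gamma> T \<longleftrightarrow> (\<forall>X\<in>sets M. \<forall>Y\<in>sets M. \<forall>e>0. \<exists>C. compact C \<and>
      (\<forall>g\<in>\<Gamma> - C. \<bar>measure M (aut_img M (T g) X \<inter> Y) - measure M X * measure M Y\<bar> < e))"

definition mixing_actions :: "'a measure \<Rightarrow> 'g::topological_group_add set \<Rightarrow> ('g \<Rightarrow> 'a \<Rightarrow> 'a) set" where
  "mixing_actions M \<Gamma> = {T. is_action M T \<and> gamma_mixing M \<Gamma> T}"

definition leash_m :: "'a measure \<Rightarrow> (nat \<Rightarrow> 'a set) \<Rightarrow> nat set \<Rightarrow> (nat \<Rightarrow> 'g set) \<Rightarrow> 'g set
    \<Rightarrow> ('g \<Rightarrow> 'a \<Rightarrow> 'a) \<Rightarrow> ('g \<Rightarrow> 'a \<Rightarrow> 'a) \<Rightarrow> real" where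
  "leash_m M A I K \<Gamma> T S = dist_dG M A I K T S + (SUP g\<in>\<Gamma>. dist_a M A (T g) (S g))"

definition leash_w :: "'a measure \<Rightarrow> (nat \<Rightarrow> 'a set) \<Rightarrow> nat set \<Rightarrow> (nat \<Rightarrow> 'g set) \<Rightarrow> 'g set
    \<Rightarrow> ('g \<Rightarrow> 'a \<Rightarrow> 'a) \<Rightarrow> ('g \<Rightarrow> 'a \<Rightarrow> 'a) \<Rightarrow> real" where
  "leash_w M A I K \<Gamma> T S = dist_aG M A I K T S + (SUP g\<in>\<Gamma>. dist_a M A (T g) (S g))"

definition metric_open :: "'b set \<Rightarrow> ('b \<Rightarrow> 'b \<Rightarrow> real) \<Rightarrow> 'b set \<Rightarrow> bool" where
  "metric_open X \<rho> U \<longleftrightarrow> U \<subseteq> X \<and> (\<forall>x\<in>U. \<exists>e>0. \<forall>y\<in>X. \<rho> x y < e \<longrightarrow> y \<in> U)"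

end

theory Submission
  imports Defs
begin

text \<open>Since \<open>a \<le> 2 d\<close> pointwise, the leash metric \<open>m\<close> dominates \<open>w\<close>. Conversely, for a
  continuous action \<open>T\<close> and a compact \<open>K\<close>, the orbit \<open>{T\<^sup>g X | g \<in> K}\<close> of a set is compact in the
  measure algebra (its self-correlations are continuous), so finitely many of the dense sets \<open>A\<^sub>j\<close>
  approximate it uniformly. Hence finitely many coefficients of \<open>a(T\<^sup>g, S\<^sup>g)\<close> control
  \<open>\<mu>(T\<^sup>g X \<triangle> S\<^sup>g X)\<close> and \<open>\<mu>((T\<^sup>g)\<^sup>-\<^sup>1 X \<triangle> (S\<^sup>g)\<^sup>-\<^sup>1 X)\<close> uniformly in \<open>g \<in> K\<close>; truncating the geometric
  series defining \<open>d\<close> and \<open>d\<^sub>G\<close> shows that \<open>a\<^sub>G\<close> controls \<open>d\<^sub>G\<close> at every action, so both metrics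
  have the same open sets.\<close>

section \<open>Measure-preserving automorphisms\<close>

lemma symdiff_commute: "symdiff X Y = symdiff Y X"
  by (auto simp: symdiff_def)

lemma symdiff_vimage: "symdiff (f -` X \<inter> S) (f -` Y \<inter> S) = f -` symdiff X Y \<inter> S"
  by (auto simp: symdiff_def)

lemma sets_symdiff: "X \<in> sets M \<Longrightarrow> Y \<in> sets M \<Longrightarrow> symdiff X Y \<in> sets M"
  by (auto simp: symdiff_def)

lemma meas_pres_vimage_sets: "f \<in> meas_pres M M \<Longrightarrow> X \<in> sets M \<Longrightarrow> f -` X \<inter> space M \<in> sets M"
  by (auto simp: meas_pres_def)

lemma meas_pres_measure_vimage:
  "f \<in> meas_pres M M \<Longrightarrow> X \<in> sets M \<Longrightarrow> measure M (f -` X \<inter> space M) = measure M X"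
  unfolding meas_pres_def using measure_distr by (metis (mono_tags, lifting) mem_Collect_eq)

lemma mp_aut_aut_inv:
  assumes "mp_aut M T"
  shows "aut_inv M T \<in> meas_pres M M \<and> (AE x in M. aut_inv M T (T x) = x) \<and> (AE x in M. T (aut_inv M T x) = x)"
proof -
  from assms obtain S where "S \<in> meas_pres M M \<and> (AE x in M. S (T x) = x) \<and> (AE x in M. T (S x) = x)"
    unfolding mp_aut_def by blast
  then show ?thesis
    unfolding aut_inv_def
    by (rule someI[where P = "\<lambda>S. S \<in> meas_pres M M \<and> (AE x in M. S (T x) = x) \<and> (AE x in M. T (S x) = x)"])
qed

lemma sets_aut_img: "mp_aut M T \<Longrightarrow> X \<in> sets M \<Longrightarrow> aut_img M T X \<in> sets M"
  unfolding aut_img_def using mp_aut_aut_inv meas_pres_vimage_sets by blast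

lemma measure_aut_img: "mp_aut M T \<Longrightarrow> X \<in> sets M \<Longrightarrow> measure M (aut_img M T X) = measure M X"
  unfolding aut_img_def using mp_aut_aut_inv meas_pres_measure_vimage by blast

lemma sets_aut_pre: "mp_aut M T \<Longrightarrow> X \<in> sets M \<Longrightarrow> aut_pre M T X \<in> sets M"
  unfolding aut_pre_def mp_aut_def using meas_pres_vimage_sets by blast

lemma measure_aut_pre: "mp_aut M T \<Longrightarrow> X \<in> sets M \<Longrightarrow> measure M (aut_pre M T X) = measure M X"
  unfolding aut_pre_def mp_aut_def using meas_pres_measure_vimage by blast

lemma measure_symdiff_aut_img:
  "mp_aut M T \<Longrightarrow> X \<in> sets M \<Longrightarrow> Y \<in> sets M \<Longrightarrow>
   measure M (symdiff (aut_img M T X) (aut_img M T Y)) = measure M (symdiff X Y)"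
  unfolding aut_img_def symdiff_vimage using mp_aut_aut_inv meas_pres_measure_vimage sets_symdiff by blast

lemma measure_aut_pre_Int:
  assumes T: "mp_aut M T" and B: "B \<in> sets M" and C: "C \<in> sets M"
  shows "measure M (aut_pre M T B \<inter> C) = measure M (B \<inter> aut_img M T C)"
proof -
  let ?S = "aut_inv M T"
  have S: "?S \<in> meas_pres M M" and ae: "AE x in M. T (?S x) = x"
    using mp_aut_aut_inv[OF T] by auto
  have S_space: "?S \<in> space M \<rightarrow> space M"
    using S by (auto simp: meas_pres_def measurable_def)
  have BC: "aut_pre M T B \<inter> C \<in> sets M"
    using sets_aut_pre[OF T B] C by auto
  have "measure M (aut_pre M T B \<inter> C) = measure M (?S -` (aut_pre M T B \<inter> C) \<inter> space M)"
    using meas_pres_measure_vimage[OF S BC] by simp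
  also have "\<dots> = measure M (B \<inter> aut_img M T C)"
  proof (rule measure_eq_AE)
    show "AE x in M. (x \<in> ?S -` (aut_pre M T B \<inter> C) \<inter> space M) = (x \<in> B \<inter> aut_img M T C)"
      using ae by eventually_elim (use S_space in \<open>auto simp: aut_pre_def aut_img_def\<close>)
    show "?S -` (aut_pre M T B \<inter> C) \<inter> space M \<in> sets M"
      using meas_pres_vimage_sets[OF S BC] .
    show "B \<inter> aut_img M T C \<in> sets M"
      using B sets_aut_img[OF T C] by blast
  qed
  finally show ?thesis .
qed

lemma action_mp_aut: "is_action M T \<Longrightarrow> mp_aut M (T g)"
  by (simp add: is_action_def)

lemma action_continuous_correlation:
  "is_action M T \<Longrightarrow> X \<in> sets M \<Longrightarrow> Y \<in> sets M \<Longrightarrow>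
   continuous_on UNIV (\<lambda>g. measure M (aut_img M (T g) X \<inter> Y))"
  by (simp add: is_action_def)

context finite_measure
begin

lemma measure_symdiff:
  assumes "X \<in> sets M" "Y \<in> sets M"
  shows "measure M (symdiff X Y) = measure M X + measure M Y - 2 * measure M (X \<inter> Y)"
proof -
  have "measure M (symdiff X Y) = measure M (X - Y) + measure M ((Y - X) - (X - Y))"
    unfolding symdiff_def using assms finite_measure_Union' by auto
  also have "(Y - X) - (X - Y) = Y - X" by auto
  finally show ?thesis
    using assms finite_measure_Diff'[of X Y] finite_measure_Diff'[of Y X] by (simp add: Int_commute)
qed

lemma abs_measure_diff_le_symdiff:
  assumes "X \<in> sets M" "Y \<in> sets M"
  shows "\<bar>measure M X - measure M Y\<bar> \<le> measure M (symdiff X Y)"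
proof -
  have "measure M (X \<inter> Y) \<le> measure M X" "measure M (X \<inter> Y) \<le> measure M Y"
    using assms by (auto intro!: finite_measure_mono)
  then show ?thesis
    using measure_symdiff[OF assms] by linarith
qed

lemma measure_symdiff_triangle:
  assumes "X \<in> sets M" "Y \<in> sets M" "Z \<in> sets M"
  shows "measure M (symdiff X Z) \<le> measure M (symdiff X Y) + measure M (symdiff Y Z)"
proof -
  have "measure M (symdiff X Z) \<le> measure M (symdiff X Y \<union> symdiff Y Z)"
    using assms by (intro finite_measure_mono) (auto simp: symdiff_def)
  also have "\<dots> \<le> measure M (symdiff X Y) + measure M (symdiff Y Z)"
    using assms by (intro measure_Un_le sets_symdiff)
  finally show ?thesis .
qed

lemma abs_measure_Int_diff_le:
  assumes "X \<in> sets M" "Y \<in> sets M" "X' \<in> sets M" "Y' \<in> sets M"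
  shows "\<bar>measure M (X \<inter> Y) - measure M (X' \<inter> Y')\<bar> \<le> measure M (symdiff X X') + measure M (symdiff Y Y')"
proof -
  have "\<bar>measure M (X \<inter> Y) - measure M (X' \<inter> Y')\<bar> \<le> measure M (symdiff (X \<inter> Y) (X' \<inter> Y'))"
    using assms by (intro abs_measure_diff_le_symdiff) auto
  also have "\<dots> \<le> measure M (symdiff X X' \<union> symdiff Y Y')"
    using assms by (intro finite_measure_mono) (auto simp: symdiff_def)
  also have "\<dots> \<le> measure M (symdiff X X') + measure M (symdiff Y Y')"
    using assms by (intro measure_Un_le sets_symdiff)
  finally show ?thesis .
qed

end

section \<open>Geometric series and suprema\<close>

lemma sums_geometric_half: "(\<lambda>i. c * (1/2::real)^i) sums (2 * c)"
  using sums_mult[OF geometric_sums[of "1/2::real"], of c] by (simp add: mult.commute)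

lemma geometric_dominated:
  fixes f :: "nat \<Rightarrow> real"
  assumes nonneg: "\<And>i. 0 \<le> f i" and le: "\<And>i. f i \<le> c * (1/2)^i"
  shows "summable f" "suminf f \<le> 2 * c" "f n \<le> suminf f" "0 \<le> suminf f"
proof -
  note geom = sums_geometric_half[of c]
  show f: "summable f"
    using nonneg le by (intro summable_comparison_test'[OF sums_summable[OF geom]]) auto
  show "suminf f \<le> 2 * c"
    using suminf_le[OF le f sums_summable[OF geom]] sums_unique[OF geom] by simp
  show "f n \<le> suminf f"
    using sum_le_suminf[OF f, of "{n}"] nonneg by auto
  show "0 \<le> suminf f"
    using suminf_nonneg[OF f] nonneg by blast
qed

lemma infsum_geometric_truncation_le:
  fixes f :: "nat \<Rightarrow> real"
  assumes nonneg: "\<And>i. i \<in> I \<Longrightarrow> 0 \<le> f i" and le: "\<And>i. i \<in> I \<Longrightarrow> f i \<le> c * (1/2)^i"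
    and head: "\<And>i. i \<in> I \<Longrightarrow> i < N \<Longrightarrow> f i \<le> \<eta> * (1/2)^i"
    and "0 \<le> \<eta>" "0 \<le> c"
  shows "infsum f I \<le> 2 * \<eta> + 2 * c * (1/2)^N"
proof -
  define b where "b i = \<eta> * (1/2::real)^i + (if N \<le> i then c * (1/2::real)^i else 0)" for i
  have tail: "(\<lambda>n. c * (1/2::real)^(n + N)) sums (2 * c * (1/2)^N)"
    using sums_geometric_half[of "c * (1/2)^N"] by (simp add: power_add mult_ac)
  have "(\<lambda>i. if N \<le> i then c * (1/2::real)^i else 0) sums
      (2 * c * (1/2)^N + (\<Sum>i<N. if N \<le> i then c * (1/2::real)^i else 0))"
    using tail by (subst sums_iff_shift[symmetric]) simp
  then have "(\<lambda>i. if N \<le> i then c * (1/2::real)^i else 0) sums (2 * c * (1/2)^N)"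
    by simp
  then have b: "b sums (2 * \<eta> + 2 * c * (1/2)^N)"
    unfolding b_def using sums_geometric_half[of \<eta>] by (intro sums_add)
  have b_nonneg: "0 \<le> b i" for i
    unfolding b_def using \<open>0 \<le> \<eta>\<close> \<open>0 \<le> c\<close> by simp
  have b_has_sum: "(b has_sum (2 * \<eta> + 2 * c * (1/2)^N)) UNIV"
    using b b_nonneg by (intro sums_nonneg_imp_has_sum_strong) auto
  then have b_summable: "b summable_on UNIV"
    by (rule has_sum_imp_summable)
  have f_le_b: "f i \<le> b i" if "i \<in> I" for i
  proof (cases "N \<le> i")
    case True
    have "0 \<le> \<eta> * (1/2::real)^i" using \<open>0 \<le> \<eta>\<close> by simp
    then show ?thesis using True le[OF that] by (simp add: b_def)
  next
    case False
    then show ?thesis using head[OF that] by (simp add: b_def)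
  qed
  have "f summable_on I"
    using summable_on_subset[OF b_summable subset_UNIV] f_le_b nonneg
    by (rule summable_on_comparison_test)
  then have "infsum f I \<le> infsum b UNIV"
    using b_summable f_le_b b_nonneg by (intro infsum_mono_neutral) auto
  also have "infsum b UNIV = 2 * \<eta> + 2 * c * (1/2)^N"
    using b_has_sum by (rule infsumI)
  finally show ?thesis .
qed

lemma SUP_bounds:
  fixes f :: "'g \<Rightarrow> real"
  assumes "K \<noteq> {}" "\<And>g. 0 \<le> f g" "\<And>g. f g \<le> c"
  shows "0 \<le> (SUP g\<in>K. f g)" "(SUP g\<in>K. f g) \<le> c" "g \<in> K \<Longrightarrow> f g \<le> (SUP g\<in>K. f g)"
proof -
  have bdd: "bdd_above (f ` K)"
    using assms(3) by (intro bdd_aboveI[of _ c]) auto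
  then show "g \<in> K \<Longrightarrow> f g \<le> (SUP g\<in>K. f g)"
    by (intro cSUP_upper)
  obtain g0 where "g0 \<in> K"
    using assms(1) by auto
  then show "0 \<le> (SUP g\<in>K. f g)"
    using cSUP_upper[OF _ bdd] assms(2)[of g0] by (meson order_trans)
  show "(SUP g\<in>K. f g) \<le> c"
    using assms(1,3) by (intro cSUP_least) auto
qed

lemma summable_on_geometric_weighted:
  fixes f :: "nat \<Rightarrow> real"
  assumes "\<And>i. i \<in> I \<Longrightarrow> 0 \<le> f i \<and> f i \<le> c"
  shows "(\<lambda>i. (1/2)^i * f i) summable_on I"
proof -
  have "((\<lambda>i. \<bar>c\<bar> * (1/2::real)^i) has_sum (2 * \<bar>c\<bar>)) UNIV"
    using sums_geometric_half[of "\<bar>c\<bar>"] by (intro sums_nonneg_imp_has_sum_strong) auto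
  then have geom: "(\<lambda>i. \<bar>c\<bar> * (1/2::real)^i) summable_on I"
    using has_sum_imp_summable summable_on_subset by blast
  have "(1/2)^i * f i \<le> \<bar>c\<bar> * (1/2)^i" if "i \<in> I" for i
    using assms[OF that] by (simp add: mult.commute mult_right_mono)
  then show ?thesis
    using summable_on_comparison_test[OF geom] assms by simp
qed

lemma finite_pos_lower_bound:
  fixes d :: "'i \<Rightarrow> real"
  assumes "finite J" "\<And>j. j \<in> J \<Longrightarrow> 0 < d j"
  shows "\<exists>\<delta>>0. \<forall>j\<in>J. \<delta> \<le> d j"
  using assms by (intro exI[of _ "Min (insert 1 (d ` J))"]) (auto simp: Min_gr_iff)

section \<open>The metrics on automorphisms and actions\<close>

definition dist_a_term :: "'a measure \<Rightarrow> (nat \<Rightarrow> 'a set) \<Rightarrow> ('a \<Rightarrow> 'a) \<Rightarrow> ('a \<Rightarrow> 'a) \<Rightarrow> nat \<Rightarrow> nat \<Rightarrow> real"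
  where "dist_a_term M A T S i j = (1/2::real)^(i+j) *
      \<bar>measure M (aut_img M T (A i) \<inter> A j) - measure M (aut_img M S (A i) \<inter> A j)\<bar>"

definition dist_d_term :: "'a measure \<Rightarrow> (nat \<Rightarrow> 'a set) \<Rightarrow> ('a \<Rightarrow> 'a) \<Rightarrow> ('a \<Rightarrow> 'a) \<Rightarrow> nat \<Rightarrow> real"
  where "dist_d_term M A T S i = (1/2::real)^i *
      (measure M (symdiff (aut_img M T (A i)) (aut_img M S (A i))) +
       measure M (symdiff (aut_pre M T (A i)) (aut_pre M S (A i))))"

lemma dist_a_eq_suminf: "dist_a M A T S = (\<Sum>i. \<Sum>j. dist_a_term M A T S i j)"
  unfolding dist_a_def dist_a_term_def ..

lemma dist_d_eq_suminf: "dist_d M A T S = (\<Sum>i. dist_d_term M A T S i)"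
  unfolding dist_d_def dist_d_term_def ..

definition uniformly_approximable :: "'a measure \<Rightarrow> (nat \<Rightarrow> 'a set) \<Rightarrow> 'g set \<Rightarrow> ('g \<Rightarrow> 'a set) \<Rightarrow> bool"
  where "uniformly_approximable M A K F \<longleftrightarrow>
    (\<forall>\<rho>>0. \<exists>N. \<forall>g\<in>K. \<exists>j<N. measure M (symdiff (F g) (A j)) < \<rho>)"

lemma uniformly_approximable_const:
  assumes "dense_family M A" "X \<in> sets M"
  shows "uniformly_approximable M A K (\<lambda>_. X)"
  unfolding uniformly_approximable_def
proof (intro allI impI)
  fix \<rho> :: real assume "\<rho> > 0"
  then obtain i where "measure M (symdiff (A i) X) < \<rho>"
    using assms unfolding dense_family_def by blast
  then show "\<exists>N. \<forall>g\<in>K. \<exists>j<N. measure M (symdiff X (A j)) < \<rho>"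
    by (intro exI[of _ "Suc i"]) (auto simp: symdiff_commute)
qed

context prob_space
begin

lemma abs_measure_diff_le_1: "\<bar>measure M X - measure M Y\<bar> \<le> 1"
  using prob_le_1[of X] prob_le_1[of Y] measure_nonneg[of M X] measure_nonneg[of M Y] by linarith

lemma dist_a_term_bounds: "0 \<le> dist_a_term M A T S i j" "dist_a_term M A T S i j \<le> (1/2)^i * (1/2)^j"
proof -
  show "0 \<le> dist_a_term M A T S i j"
    by (simp add: dist_a_term_def)
  show "dist_a_term M A T S i j \<le> (1/2)^i * (1/2)^j"
    unfolding dist_a_term_def power_add by (rule mult_left_le) (simp_all add: abs_measure_diff_le_1)
qed

lemma dist_a_row_bounds:
  "0 \<le> (\<Sum>j. dist_a_term M A T S i j)" "(\<Sum>j. dist_a_term M A T S i j) \<le> 2 * (1/2)^i"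
  "dist_a_term M A T S i j \<le> (\<Sum>j. dist_a_term M A T S i j)"
  using geometric_dominated[of "dist_a_term M A T S i" "(1/2)^i"] dist_a_term_bounds by auto

lemma
  shows dist_a_nonneg: "0 \<le> dist_a M A T S"
    and dist_a_le_4: "dist_a M A T S \<le> 4"
    and dist_a_term_le_dist_a: "dist_a_term M A T S i j \<le> dist_a M A T S"
proof -
  note rows = geometric_dominated[of "\<lambda>i. \<Sum>j. dist_a_term M A T S i j" 2, folded dist_a_eq_suminf,
      OF dist_a_row_bounds(1,2)]
  show "0 \<le> dist_a M A T S" "dist_a M A T S \<le> 4"
    using rows by auto
  show "dist_a_term M A T S i j \<le> dist_a M A T S"
    using rows(3) dist_a_row_bounds(3) by (rule order_trans[rotated])
qed

lemma abs_measure_Int_diff_le_dist_a: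
  "\<bar>measure M (aut_img M T (A i) \<inter> A j) - measure M (aut_img M S (A i) \<inter> A j)\<bar>
     \<le> 2^(i+j) * dist_a M A T S"
proof -
  have "2^(i+j) * dist_a_term M A T S i j \<le> 2^(i+j) * dist_a M A T S"
    using dist_a_term_le_dist_a by simp
  then show ?thesis
    by (simp add: dist_a_term_def power_one_over)
qed

lemma dist_d_term_bounds: "0 \<le> dist_d_term M A T S i" "dist_d_term M A T S i \<le> 2 * (1/2)^i"
proof -
  show "0 \<le> dist_d_term M A T S i"
    by (simp add: dist_d_term_def)
  have "measure M (symdiff (aut_img M T (A i)) (aut_img M S (A i))) +
        measure M (symdiff (aut_pre M T (A i)) (aut_pre M S (A i))) \<le> 2"
    using prob_le_1 by (metis add_mono one_add_one)
  then show "dist_d_term M A T S i \<le> 2 * (1/2)^i"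
    unfolding dist_d_term_def by (simp add: mult.commute)
qed

lemma
  shows dist_d_nonneg: "0 \<le> dist_d M A T S"
    and dist_d_le_4: "dist_d M A T S \<le> 4"
  using geometric_dominated[of "dist_d_term M A T S" 2, folded dist_d_eq_suminf] dist_d_term_bounds
  by auto

lemma dist_a_le_dist_d:
  assumes A: "\<And>i. A i \<in> sets M" and T: "mp_aut M T" and S: "mp_aut M S"
  shows "dist_a M A T S \<le> 2 * dist_d M A T S"
proof -
  have row: "(\<Sum>j. dist_a_term M A T S i j) \<le> 2 * dist_d_term M A T S i" for i
  proof -
    define \<sigma> where "\<sigma> = measure M (symdiff (aut_img M T (A i)) (aut_img M S (A i)))"
    have "dist_a_term M A T S i j \<le> ((1/2)^i * \<sigma>) * (1/2)^j" for j
    proof -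
      have "\<bar>measure M (aut_img M T (A i) \<inter> A j) - measure M (aut_img M S (A i) \<inter> A j)\<bar> \<le> \<sigma>"
        using abs_measure_Int_diff_le[of "aut_img M T (A i)" "A j" "aut_img M S (A i)" "A j"]
        by (simp add: \<sigma>_def A sets_aut_img T S symdiff_def)
      then show ?thesis
        unfolding dist_a_term_def power_add by (simp add: mult_left_mono mult_ac)
    qed
    then have "(\<Sum>j. dist_a_term M A T S i j) \<le> 2 * ((1/2)^i * \<sigma>)"
      using geometric_dominated(2)[of "dist_a_term M A T S i"] dist_a_term_bounds by blast
    also have "\<dots> \<le> 2 * dist_d_term M A T S i"
      unfolding dist_d_term_def \<sigma>_def by (simp add: mult_left_mono)
    finally show ?thesis .
  qed
  have "dist_a M A T S \<le> (\<Sum>i. 2 * dist_d_term M A T S i)"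
    unfolding dist_a_eq_suminf
    using geometric_dominated(1)[of "\<lambda>i. \<Sum>j. dist_a_term M A T S i j" 2]
      geometric_dominated(1)[of "dist_d_term M A T S" 2] dist_a_row_bounds dist_d_term_bounds row
    by (intro suminf_le summable_mult) auto
  also have "\<dots> = 2 * dist_d M A T S"
    unfolding dist_d_eq_suminf
    using geometric_dominated(1)[of "dist_d_term M A T S" 2] dist_d_term_bounds by (intro suminf_mult) auto
  finally show ?thesis .
qed

lemma dist_d_eq_infsum: "dist_d M A T S = infsum (dist_d_term M A T S) UNIV"
proof -
  have "(dist_d_term M A T S has_sum dist_d M A T S) UNIV"
    unfolding dist_d_eq_suminf using dist_d_term_bounds
    by (intro sums_nonneg_imp_has_sum_strong summable_sums geometric_dominated(1)[of _ 2]) auto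
  then show ?thesis
    by (simp add: infsumI)
qed

lemma SUP_dist_a:
  assumes "K \<noteq> {}"
  shows "0 \<le> (SUP g\<in>K. dist_a M A (T g) (S g))" "(SUP g\<in>K. dist_a M A (T g) (S g)) \<le> 4"
    "g \<in> K \<Longrightarrow> dist_a M A (T g) (S g) \<le> (SUP g\<in>K. dist_a M A (T g) (S g))"
  using SUP_bounds[OF assms, of "\<lambda>g. dist_a M A (T g) (S g)" 4] dist_a_nonneg dist_a_le_4 by auto

lemma SUP_dist_d:
  assumes "K \<noteq> {}"
  shows "0 \<le> (SUP g\<in>K. dist_d M A (T g) (S g))" "(SUP g\<in>K. dist_d M A (T g) (S g)) \<le> 4"
    "g \<in> K \<Longrightarrow> dist_d M A (T g) (S g) \<le> (SUP g\<in>K. dist_d M A (T g) (S g))"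
  using SUP_bounds[OF assms, of "\<lambda>g. dist_d M A (T g) (S g)" 4] dist_d_nonneg dist_d_le_4 by auto

lemma dist_aG_summable:
  assumes K: "\<And>i. i \<in> I \<Longrightarrow> K i \<noteq> {}"
  shows "(\<lambda>i. (1/2::real)^i * (SUP g\<in>K i. dist_a M A (T g) (S g))) summable_on I"
  using SUP_dist_a(1,2)[OF K] by (intro summable_on_geometric_weighted[where c = 4]) auto

lemma dist_dG_summable:
  assumes K: "\<And>i. i \<in> I \<Longrightarrow> K i \<noteq> {}"
  shows "(\<lambda>i. (1/2::real)^i * (SUP g\<in>K i. dist_d M A (T g) (S g))) summable_on I"
  using SUP_dist_d(1,2)[OF K] by (intro summable_on_geometric_weighted[where c = 4]) auto

lemma dist_aG_nonneg:
  assumes K: "\<And>i. i \<in> I \<Longrightarrow> K i \<noteq> {}"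
  shows "0 \<le> dist_aG M A I K T S"
  unfolding dist_aG_def using SUP_dist_a(1)[OF K] by (intro infsum_nonneg) auto

lemma dist_a_le_dist_aG:
  assumes K: "\<And>i. i \<in> I \<Longrightarrow> K i \<noteq> {}" and i: "i \<in> I" and g: "g \<in> K i"
  shows "(1/2)^i * dist_a M A (T g) (S g) \<le> dist_aG M A I K T S"
proof -
  let ?f = "\<lambda>i. (1/2::real)^i * (SUP g\<in>K i. dist_a M A (T g) (S g))"
  have "(1/2)^i * dist_a M A (T g) (S g) \<le> ?f i"
    using SUP_dist_a(3)[OF K[OF i] g] by (simp add: mult_left_mono)
  also have "\<dots> = infsum ?f {i}"
    by simp
  also have "\<dots> \<le> infsum ?f I"
    using dist_aG_summable[OF K] i SUP_dist_a(1)[OF K] by (intro infsum_mono2) auto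
  finally show ?thesis
    unfolding dist_aG_def .
qed

lemma dist_aG_le_dist_dG:
  assumes A: "\<And>i. A i \<in> sets M" and K: "\<And>i. i \<in> I \<Longrightarrow> K i \<noteq> {}"
    and T: "\<And>g. mp_aut M (T g)" and S: "\<And>g. mp_aut M (S g)"
  shows "dist_aG M A I K T S \<le> 2 * dist_dG M A I K T S"
proof -
  have "(SUP g\<in>K i. dist_a M A (T g) (S g)) \<le> 2 * (SUP g\<in>K i. dist_d M A (T g) (S g))" if i: "i \<in> I" for i
  proof (rule cSUP_least[OF K[OF i]])
    fix g assume "g \<in> K i"
    then have "dist_d M A (T g) (S g) \<le> (SUP g\<in>K i. dist_d M A (T g) (S g))"
      by (rule SUP_dist_d(3)[OF K[OF i]])
    then show "dist_a M A (T g) (S g) \<le> 2 * (SUP g\<in>K i. dist_d M A (T g) (S g))"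
      using dist_a_le_dist_d[OF A T S] by (meson mult_left_mono order_trans zero_le_numeral)
  qed
  then have "dist_aG M A I K T S \<le> infsum (\<lambda>i. 2 * ((1/2::real)^i * (SUP g\<in>K i. dist_d M A (T g) (S g)))) I"
    unfolding dist_aG_def using dist_aG_summable[OF K] summable_on_cmult_right[OF dist_dG_summable[OF K]]
    by (intro infsum_mono) (auto intro: mult_left_mono)
  also have "\<dots> = 2 * dist_dG M A I K T S"
    unfolding dist_dG_def by (rule infsum_cmult_right')
  finally show ?thesis .
qed

section \<open>Uniform control of \<open>d\<close> by \<open>a\<close> along compact orbits\<close>

lemma abs_correlation_diff_le:
  assumes A: "A i \<in> sets M" "A j \<in> sets M" and T: "mp_aut M T" and S: "mp_aut M S"
    and B: "B \<in> sets M" and C: "C \<in> sets M"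
  shows "\<bar>measure M (aut_img M T B \<inter> C) - measure M (aut_img M S B \<inter> C)\<bar>
     \<le> 2 * measure M (symdiff B (A i)) + 2 * measure M (symdiff C (A j)) + 2^(i+j) * dist_a M A T S"
proof -
  have "\<bar>measure M (aut_img M R B \<inter> C) - measure M (aut_img M R (A i) \<inter> A j)\<bar>
      \<le> measure M (symdiff B (A i)) + measure M (symdiff C (A j))" if R: "mp_aut M R" for R
    using abs_measure_Int_diff_le[of "aut_img M R B" C "aut_img M R (A i)" "A j"]
      measure_symdiff_aut_img[OF R B A(1)] sets_aut_img[OF R] A B C by auto
  from this[OF T] this[OF S] abs_measure_Int_diff_le_dist_a[of T A i j S]
  show ?thesis by linarith
qed

text \<open>As all \<open>F g\<close> have measure \<open>c\<close>, \<open>\<mu>(F g \<triangle> F h) = 2 (c - \<mu>(F g \<inter> F h))\<close>; continuity of the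
  correlation therefore makes finitely many \<open>F h\<close> a net over the compact \<open>K\<close>.\<close>
lemma uniformly_approximable_if_continuous_correlation:
  assumes A: "\<And>i. A i \<in> sets M" and dense: "dense_family M A" and K: "compact K"
    and F: "\<And>g. F g \<in> sets M" and c: "\<And>g. measure M (F g) = c"
    and cont: "\<And>h. continuous_on UNIV (\<lambda>g. measure M (F g \<inter> F h))"
  shows "uniformly_approximable M A K F"
  unfolding uniformly_approximable_def
proof (intro allI impI)
  fix \<rho> :: real assume \<rho>: "\<rho> > 0"
  define U where "U h = {g. c - \<rho>/4 < measure M (F g \<inter> F h)}" for h
  have U_open: "open (U h)" for h
    unfolding U_def using cont by (intro open_Collect_less) auto
  have U_self: "g \<in> U g" for g
    unfolding U_def using c[of g] \<rho> by simp
  have "K \<subseteq> (\<Union>h\<in>K. U h)"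
    using U_self by blast
  then obtain t where t: "finite t" "K \<subseteq> (\<Union>h\<in>t. U h)"
    using compactE_image[where f = U, OF K U_open] by metis
  have "\<exists>i. measure M (symdiff (F h) (A i)) < \<rho>/2" for h
  proof -
    obtain i where "measure M (symdiff (A i) (F h)) < \<rho>/2"
      using dense F[of h] \<rho> unfolding dense_family_def by (meson half_gt_zero)
    then show ?thesis
      by (auto simp: symdiff_commute)
  qed
  then obtain j where j: "\<And>h. measure M (symdiff (F h) (A (j h))) < \<rho>/2"
    by metis
  have "\<exists>i<Suc (Max (j ` t)). measure M (symdiff (F g) (A i)) < \<rho>" if "g \<in> K" for g
  proof -
    obtain h where h: "h \<in> t" "g \<in> U h"
      using t \<open>g \<in> K\<close> by auto
    have "measure M (symdiff (F g) (F h)) = 2 * (c - measure M (F g \<inter> F h))"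
      using measure_symdiff[OF F F] c by simp
    also have "\<dots> < \<rho>/2"
      using h(2) unfolding U_def by simp
    finally have "measure M (symdiff (F g) (A (j h))) < \<rho>"
      using measure_symdiff_triangle[OF F[of g] F[of h] A[of "j h"]] j[of h] by linarith
    moreover have "j h < Suc (Max (j ` t))"
      using t(1) h(1) by (simp add: le_imp_less_Suc)
    ultimately show ?thesis
      by blast
  qed
  then show "\<exists>N. \<forall>g\<in>K. \<exists>j<N. measure M (symdiff (F g) (A j)) < \<rho>"
    by blast
qed

lemma correlation_uniformly_close:
  assumes A: "\<And>i. A i \<in> sets M" and T: "\<And>g. g \<in> K \<Longrightarrow> mp_aut M (T g)"
    and F1: "\<And>g. F1 g \<in> sets M" "uniformly_approximable M A K F1"
    and F2: "\<And>g. F2 g \<in> sets M" "uniformly_approximable M A K F2" and \<eta>: "\<eta> > 0"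
  shows "\<exists>\<delta>>0. \<forall>g\<in>K. \<forall>R. mp_aut M R \<longrightarrow> dist_a M A (T g) R < \<delta> \<longrightarrow>
     \<bar>measure M (aut_img M (T g) (F1 g) \<inter> F2 g) - measure M (aut_img M R (F1 g) \<inter> F2 g)\<bar> < \<eta>"
proof -
  define \<rho> where "\<rho> = \<eta> / 5"
  have \<rho>: "\<rho> > 0" using \<eta> by (simp add: \<rho>_def)
  obtain N1 where N1: "\<forall>g\<in>K. \<exists>i<N1. measure M (symdiff (F1 g) (A i)) < \<rho>"
    using F1(2) \<rho> unfolding uniformly_approximable_def by blast
  obtain N2 where N2: "\<forall>g\<in>K. \<exists>j<N2. measure M (symdiff (F2 g) (A j)) < \<rho>"
    using F2(2) \<rho> unfolding uniformly_approximable_def by blast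
  show ?thesis
  proof (intro exI[of _ "\<rho> / 2^(N1+N2)"] conjI ballI allI impI)
    show "\<rho> / 2^(N1+N2) > 0" using \<rho> by simp
    fix g R assume g: "g \<in> K" and R: "mp_aut M R" and a: "dist_a M A (T g) R < \<rho> / 2^(N1+N2)"
    obtain i j where ij: "i < N1" "measure M (symdiff (F1 g) (A i)) < \<rho>"
      "j < N2" "measure M (symdiff (F2 g) (A j)) < \<rho>"
      using N1 N2 g by blast
    have "(2::real)^(i+j) * dist_a M A (T g) R \<le> 2^(N1+N2) * dist_a M A (T g) R"
      using ij(1,3) dist_a_nonneg by (intro mult_right_mono power_increasing) auto
    also have "\<dots> < \<rho>"
      using a by (simp add: pos_less_divide_eq mult.commute)
    finally have "2^(i+j) * dist_a M A (T g) R < \<rho>" .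
    then show "\<bar>measure M (aut_img M (T g) (F1 g) \<inter> F2 g) - measure M (aut_img M R (F1 g) \<inter> F2 g)\<bar> < \<eta>"
      using abs_correlation_diff_le[OF A[of i] A[of j] T[OF g] R F1(1)[of g] F2(1)[of g]] ij(2,4)
      unfolding \<rho>_def by linarith
  qed
qed

lemma aut_img_uniformly_close:
  fixes T :: "'g::topological_group_add \<Rightarrow> 'a \<Rightarrow> 'a"
  assumes A: "\<And>i. A i \<in> sets M" and dense: "dense_family M A" and T: "is_action M T"
    and K: "compact K" and X: "X \<in> sets M" and \<eta>: "\<eta> > 0"
  shows "\<exists>\<delta>>0. \<forall>g\<in>K. \<forall>R. mp_aut M R \<longrightarrow> dist_a M A (T g) R < \<delta> \<longrightarrow>
     measure M (symdiff (aut_img M (T g) X) (aut_img M R X)) < \<eta>"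
proof -
  define F where "F g = aut_img M (T g) X" for g
  have T_aut: "mp_aut M (T g)" for g
    using action_mp_aut[OF T] .
  have F: "F g \<in> sets M" "measure M (F g) = measure M X" for g
    unfolding F_def using sets_aut_img[OF T_aut X] measure_aut_img[OF T_aut X] by auto
  have "uniformly_approximable M A K F"
    using A dense K F action_continuous_correlation[OF T X F(1)]
    by (intro uniformly_approximable_if_continuous_correlation) (auto simp: F_def)
  then obtain \<delta> where \<delta>: "\<delta> > 0" and close: "\<forall>g\<in>K. \<forall>R. mp_aut M R \<longrightarrow> dist_a M A (T g) R < \<delta> \<longrightarrow>
      \<bar>measure M (aut_img M (T g) X \<inter> F g) - measure M (aut_img M R X \<inter> F g)\<bar> < \<eta>/2"
    using correlation_uniformly_close[of A K T "\<lambda>_. X" F "\<eta>/2"]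
      uniformly_approximable_const[OF dense X] A T_aut X F(1) \<eta> by auto
  show ?thesis
  proof (intro exI[of _ \<delta>] conjI ballI allI impI \<delta>)
    fix g R assume "g \<in> K" "mp_aut M R" "dist_a M A (T g) R < \<delta>"
    then have "\<bar>measure M (F g \<inter> F g) - measure M (aut_img M R X \<inter> F g)\<bar> < \<eta>/2"
      using close unfolding F_def by blast
    then have "measure M (F g \<inter> F g) - measure M (aut_img M R X \<inter> F g) < \<eta>/2"
      by (rule le_less_trans[OF abs_ge_self])
    then show "measure M (symdiff (aut_img M (T g) X) (aut_img M R X)) < \<eta>"
      using measure_symdiff[OF F(1) sets_aut_img[OF \<open>mp_aut M R\<close> X]] F(2)
        measure_aut_img[OF \<open>mp_aut M R\<close> X]
      by (simp add: F_def Int_commute)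
  qed
qed

lemma aut_pre_uniformly_close:
  fixes T :: "'g::topological_group_add \<Rightarrow> 'a \<Rightarrow> 'a"
  assumes A: "\<And>i. A i \<in> sets M" and dense: "dense_family M A" and T: "is_action M T"
    and K: "compact K" and X: "X \<in> sets M" and \<eta>: "\<eta> > 0"
  shows "\<exists>\<delta>>0. \<forall>g\<in>K. \<forall>R. mp_aut M R \<longrightarrow> dist_a M A (T g) R < \<delta> \<longrightarrow>
     measure M (symdiff (aut_pre M (T g) X) (aut_pre M R X)) < \<eta>"
proof -
  define F where "F g = aut_pre M (T g) X" for g
  have T_aut: "mp_aut M (T g)" for g
    using action_mp_aut[OF T] .
  have F: "F g \<in> sets M" "measure M (F g) = measure M X" for g
    unfolding F_def using sets_aut_pre[OF T_aut X] measure_aut_pre[OF T_aut X] by auto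
  have "continuous_on UNIV (\<lambda>g. measure M (F g \<inter> F h))" for h
    using action_continuous_correlation[OF T F(1) X, of h]
    by (simp add: F_def measure_aut_pre_Int[OF T_aut X F(1)[unfolded F_def]] Int_commute)
  then have "uniformly_approximable M A K F"
    using A dense K F by (intro uniformly_approximable_if_continuous_correlation) auto
  then obtain \<delta> where \<delta>: "\<delta> > 0" and close: "\<forall>g\<in>K. \<forall>R. mp_aut M R \<longrightarrow> dist_a M A (T g) R < \<delta> \<longrightarrow>
      \<bar>measure M (aut_img M (T g) (F g) \<inter> X) - measure M (aut_img M R (F g) \<inter> X)\<bar> < \<eta>/2"
    using correlation_uniformly_close[of A K T F "\<lambda>_. X" "\<eta>/2"]
      uniformly_approximable_const[OF dense X] A T_aut X F(1) \<eta> by auto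
  show ?thesis
  proof (intro exI[of _ \<delta>] conjI ballI allI impI \<delta>)
    fix g R assume "g \<in> K" and R: "mp_aut M R" and "dist_a M A (T g) R < \<delta>"
    then have "\<bar>measure M (aut_img M (T g) (F g) \<inter> X) - measure M (aut_img M R (F g) \<inter> X)\<bar> < \<eta>/2"
      using close by blast
    moreover have "measure M (aut_img M S (F g) \<inter> X) = measure M (aut_pre M S X \<inter> F g)"
      if "mp_aut M S" for S
      using measure_aut_pre_Int[OF that X F(1)] by (simp add: Int_commute)
    ultimately have "\<bar>measure M (F g \<inter> F g) - measure M (aut_pre M R X \<inter> F g)\<bar> < \<eta>/2"
      using T_aut R by (simp add: F_def)
    then have "measure M (F g \<inter> F g) - measure M (aut_pre M R X \<inter> F g) < \<eta>/2"
      by (rule le_less_trans[OF abs_ge_self])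
    then show "measure M (symdiff (aut_pre M (T g) X) (aut_pre M R X)) < \<eta>"
      using measure_symdiff[OF F(1) sets_aut_pre[OF R X]] F(2) measure_aut_pre[OF R X]
      by (simp add: F_def Int_commute)
  qed
qed

lemma dist_d_uniformly_small:
  fixes T :: "'g::topological_group_add \<Rightarrow> 'a \<Rightarrow> 'a"
  assumes A: "\<And>i. A i \<in> sets M" and dense: "dense_family M A" and T: "is_action M T"
    and K: "compact K" and \<epsilon>: "\<epsilon> > 0"
  shows "\<exists>\<delta>>0. \<forall>g\<in>K. \<forall>R. mp_aut M R \<longrightarrow> dist_a M A (T g) R < \<delta> \<longrightarrow> dist_d M A (T g) R \<le> \<epsilon>"
proof -
  obtain N where N: "(1/2::real)^N < \<epsilon>/8"
    using real_arch_pow_inv[of "\<epsilon>/8" "1/2"] \<epsilon> by auto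
  define \<eta> where "\<eta> = \<epsilon>/8"
  have "\<exists>\<delta>>0. \<forall>g\<in>K. \<forall>R. mp_aut M R \<longrightarrow> dist_a M A (T g) R < \<delta> \<longrightarrow>
      measure M (symdiff (aut_img M (T g) (A i)) (aut_img M R (A i))) < \<eta> \<and>
      measure M (symdiff (aut_pre M (T g) (A i)) (aut_pre M R (A i))) < \<eta>" for i
  proof -
    have \<eta>: "\<eta> > 0" using \<epsilon> by (simp add: \<eta>_def)
    obtain \<delta>1 where "\<delta>1 > 0" "\<forall>g\<in>K. \<forall>R. mp_aut M R \<longrightarrow> dist_a M A (T g) R < \<delta>1 \<longrightarrow>
        measure M (symdiff (aut_img M (T g) (A i)) (aut_img M R (A i))) < \<eta>"
      using aut_img_uniformly_close[OF A dense T K A \<eta>] by blast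
    moreover obtain \<delta>2 where "\<delta>2 > 0" "\<forall>g\<in>K. \<forall>R. mp_aut M R \<longrightarrow> dist_a M A (T g) R < \<delta>2 \<longrightarrow>
        measure M (symdiff (aut_pre M (T g) (A i)) (aut_pre M R (A i))) < \<eta>"
      using aut_pre_uniformly_close[OF A dense T K A \<eta>] by blast
    ultimately show ?thesis
      by (intro exI[of _ "min \<delta>1 \<delta>2"]) auto
  qed
  then obtain \<delta>i where \<delta>i: "\<And>i. \<delta>i i > 0" "\<And>i. \<forall>g\<in>K. \<forall>R. mp_aut M R \<longrightarrow> dist_a M A (T g) R < \<delta>i i \<longrightarrow>
      measure M (symdiff (aut_img M (T g) (A i)) (aut_img M R (A i))) < \<eta> \<and>
      measure M (symdiff (aut_pre M (T g) (A i)) (aut_pre M R (A i))) < \<eta>"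
    by metis
  obtain \<delta> where \<delta>: "\<delta> > 0" "\<forall>i\<in>{..<N}. \<delta> \<le> \<delta>i i"
    using finite_pos_lower_bound[of "{..<N}" \<delta>i] \<delta>i(1) by blast
  show ?thesis
  proof (intro exI[of _ \<delta>] conjI ballI allI impI \<delta>(1))
    fix g R assume g: "g \<in> K" and R: "mp_aut M R" and a: "dist_a M A (T g) R < \<delta>"
    have "dist_d_term M A (T g) R i \<le> (2 * \<eta>) * (1/2)^i" if "i < N" for i
    proof -
      have "dist_a M A (T g) R < \<delta>i i"
        using a \<delta>(2) that by (meson lessThan_iff less_le_trans)
      then have "measure M (symdiff (aut_img M (T g) (A i)) (aut_img M R (A i))) +
          measure M (symdiff (aut_pre M (T g) (A i)) (aut_pre M R (A i))) \<le> 2 * \<eta>"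
        using \<delta>i(2)[of i] g R by fastforce
      then show ?thesis
        unfolding dist_d_term_def by (simp add: mult.commute mult_left_mono)
    qed
    then have "infsum (dist_d_term M A (T g) R) UNIV \<le> 2 * (2 * \<eta>) + 2 * 2 * (1/2)^N"
      using dist_d_term_bounds \<epsilon>
      by (intro infsum_geometric_truncation_le) (auto simp: \<eta>_def)
    then show "dist_d M A (T g) R \<le> \<epsilon>"
      using N by (simp add: dist_d_eq_infsum \<eta>_def)
  qed
qed

lemma dist_dG_small_if_dist_aG_small:
  fixes T :: "'g::topological_group_add \<Rightarrow> 'a \<Rightarrow> 'a"
  assumes A: "\<And>i. A i \<in> sets M" and dense: "dense_family M A" and T: "is_action M T"
    and K: "\<And>i. i \<in> I \<Longrightarrow> compact (K i) \<and> K i \<noteq> {}" and \<epsilon>: "\<epsilon> > 0"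
  shows "\<exists>\<delta>>0. \<forall>S. (\<forall>g. mp_aut M (S g)) \<longrightarrow> dist_aG M A I K T S < \<delta> \<longrightarrow> dist_dG M A I K T S \<le> \<epsilon>"
proof -
  have K_ne: "\<And>i. i \<in> I \<Longrightarrow> K i \<noteq> {}"
    using K by blast
  obtain N where N: "(1/2::real)^N < \<epsilon>/16"
    using real_arch_pow_inv[of "\<epsilon>/16" "1/2"] \<epsilon> by auto
  have "\<forall>i\<in>I. \<exists>\<delta>>0. \<forall>g\<in>K i. \<forall>R. mp_aut M R \<longrightarrow> dist_a M A (T g) R < \<delta> \<longrightarrow>
      dist_d M A (T g) R \<le> \<epsilon>/4"
  proof
    fix i assume "i \<in> I"
    then show "\<exists>\<delta>>0. \<forall>g\<in>K i. \<forall>R. mp_aut M R \<longrightarrow> dist_a M A (T g) R < \<delta> \<longrightarrow>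
        dist_d M A (T g) R \<le> \<epsilon>/4"
      using dist_d_uniformly_small[OF A dense T, of "K i" "\<epsilon>/4"] K \<epsilon> by auto
  qed
  then obtain \<delta>i where \<delta>i: "\<And>i. i \<in> I \<Longrightarrow> \<delta>i i > 0"
    "\<And>i. i \<in> I \<Longrightarrow> \<forall>g\<in>K i. \<forall>R. mp_aut M R \<longrightarrow> dist_a M A (T g) R < \<delta>i i \<longrightarrow>
      dist_d M A (T g) R \<le> \<epsilon>/4"
    by metis
  obtain \<delta> where \<delta>: "\<delta> > 0" "\<forall>i\<in>I \<inter> {..<N}. \<delta> \<le> (1/2)^i * \<delta>i i"
    using finite_pos_lower_bound[of "I \<inter> {..<N}" "\<lambda>i. (1/2)^i * \<delta>i i"] \<delta>i(1) by auto
  show ?thesis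
  proof (intro exI[of _ \<delta>] conjI allI impI \<delta>(1))
    fix S assume S: "\<forall>g. mp_aut M (S g)" and a: "dist_aG M A I K T S < \<delta>"
    have "(SUP g\<in>K i. dist_d M A (T g) (S g)) \<le> \<epsilon>/4" if i: "i \<in> I" "i < N" for i
    proof (rule cSUP_least[OF K_ne[OF i(1)]])
      fix g assume g: "g \<in> K i"
      have "(1/2)^i * dist_a M A (T g) (S g) \<le> dist_aG M A I K T S"
        by (rule dist_a_le_dist_aG) (use K_ne i g in auto)
      moreover have "\<delta> \<le> (1/2)^i * \<delta>i i"
        using \<delta>(2) i by blast
      ultimately have "(1/2)^i * dist_a M A (T g) (S g) < (1/2)^i * \<delta>i i"
        using a by linarith
      then show "dist_d M A (T g) (S g) \<le> \<epsilon>/4"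
        using \<delta>i(2)[OF i(1)] g S by simp
    qed
    then have "dist_dG M A I K T S \<le> 2 * (\<epsilon>/4) + 2 * 4 * (1/2)^N"
      unfolding dist_dG_def using SUP_dist_d(1,2)[OF K_ne] \<epsilon>
      by (intro infsum_geometric_truncation_le) (auto simp: mult.commute mult_right_mono)
    then show "dist_dG M A I K T S \<le> \<epsilon>"
      using N by simp
  qed
qed

lemma leash_w_le_leash_m:
  assumes A: "\<And>i. A i \<in> sets M" and K: "\<And>i. i \<in> I \<Longrightarrow> K i \<noteq> {}" and \<Gamma>: "\<Gamma> \<noteq> {}"
    and T: "\<And>g. mp_aut M (T g)" and S: "\<And>g. mp_aut M (S g)"
  shows "leash_w M A I K \<Gamma> T S \<le> 2 * leash_m M A I K \<Gamma> T S"
proof -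
  have "dist_aG M A I K T S \<le> 2 * dist_dG M A I K T S"
    by (rule dist_aG_le_dist_dG) (use A K T S in auto)
  with SUP_dist_a(1)[OF \<Gamma>, of A T S] show ?thesis
    unfolding leash_w_def leash_m_def distrib_left by linarith
qed

lemma leash_m_small_if_leash_w_small:
  fixes T :: "'g::topological_group_add \<Rightarrow> 'a \<Rightarrow> 'a"
  assumes A: "\<And>i. A i \<in> sets M" and dense: "dense_family M A" and T: "is_action M T"
    and K: "\<And>i. i \<in> I \<Longrightarrow> compact (K i) \<and> K i \<noteq> {}" and \<Gamma>: "\<Gamma> \<noteq> {}" and \<epsilon>: "\<epsilon> > 0"
  shows "\<exists>\<delta>>0. \<forall>S. (\<forall>g. mp_aut M (S g)) \<longrightarrow> leash_w M A I K \<Gamma> T S < \<delta> \<longrightarrow> leash_m M A I K \<Gamma> T S < \<epsilon>"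
proof -
  have "\<exists>\<delta>>0. \<forall>S. (\<forall>g. mp_aut M (S g)) \<longrightarrow> dist_aG M A I K T S < \<delta> \<longrightarrow>
      dist_dG M A I K T S \<le> \<epsilon>/2"
    by (rule dist_dG_small_if_dist_aG_small) (use A dense T K \<epsilon> in auto)
  then obtain \<delta> where \<delta>: "\<delta> > 0" "\<And>S. \<forall>g. mp_aut M (S g) \<Longrightarrow> dist_aG M A I K T S < \<delta> \<Longrightarrow>
      dist_dG M A I K T S \<le> \<epsilon>/2"
    by blast
  show ?thesis
  proof (intro exI[of _ "min \<delta> (\<epsilon>/2)"] conjI allI impI)
    fix S assume S: "\<forall>g. mp_aut M (S g)" and w: "leash_w M A I K \<Gamma> T S < min \<delta> (\<epsilon>/2)"
    have "0 \<le> dist_aG M A I K T S" "0 \<le> (SUP g\<in>\<Gamma>. dist_a M A (T g) (S g))"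
      using dist_aG_nonneg[of I K A T S] SUP_dist_a(1)[OF \<Gamma>] K by auto
    with w have "dist_aG M A I K T S < \<delta>" "(SUP g\<in>\<Gamma>. dist_a M A (T g) (S g)) < \<epsilon>/2"
      unfolding leash_w_def by linarith+
    with \<delta>(2)[OF S] show "leash_m M A I K \<Gamma> T S < \<epsilon>"
      unfolding leash_m_def by fastforce
  qed (use \<delta> \<epsilon> in simp)
qed

end

lemma metric_open_transfer:
  assumes "\<And>x \<epsilon>. x \<in> X \<Longrightarrow> \<epsilon> > 0 \<Longrightarrow> \<exists>\<delta>>0. \<forall>y\<in>X. \<sigma> x y < \<delta> \<longrightarrow> \<rho> x y < \<epsilon>"
    and "metric_open X \<rho> U"
  shows "metric_open X \<sigma> U"
  using assms unfolding metric_open_def by (meson subsetD)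

lemma metric_open_if_dominated:
  assumes c: "c > 0" and le: "\<And>x y. x \<in> X \<Longrightarrow> y \<in> X \<Longrightarrow> \<rho> x y \<le> c * \<sigma> x y"
    and "metric_open X \<rho> U"
  shows "metric_open X \<sigma> U"
proof (rule metric_open_transfer[OF _ \<open>metric_open X \<rho> U\<close>])
  fix x and \<epsilon> :: real assume "x \<in> X" "\<epsilon> > 0"
  have "\<rho> x y < \<epsilon>" if "y \<in> X" "\<sigma> x y < \<epsilon> / c" for y
    using le[OF \<open>x \<in> X\<close> that(1)] that(2) c by (simp add: pos_less_divide_eq mult.commute)
  then show "\<exists>\<delta>>0. \<forall>y\<in>X. \<sigma> x y < \<delta> \<longrightarrow> \<rho> x y < \<epsilon>"
    using \<open>\<epsilon> > 0\<close> c by (intro exI[of _ "\<epsilon> / c"]) auto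
qed

theorem mainTheorem9:
  fixes M :: "'a measure"
    and A :: "nat \<Rightarrow> 'a set"
    and I :: "nat set"
    and K :: "nat \<Rightarrow> 'g::{topological_group_add, t2_space, first_countable_topology} set"
    and \<Gamma> :: "'g set"
  assumes "prob_space M"
    and "lebesgue_space M"
    and "non_atomic M"
    and "\<And>i. A i \<in> sets M"
    and "generates_mod0 M A"
    and "dense_family M A"
    and "locally_compact_space (euclidean :: 'g topology)"
    and "\<And>i. i \<in> I \<Longrightarrow> compact (K i) \<and> interior (K i) \<noteq> {}"
    and "generated_subgroup (\<Union>i\<in>I. K i) = UNIV"
    and "\<not> (\<exists>C. compact C \<and> \<Gamma> \<subseteq> C)"
  shows "\<forall>U. metric_open (mixing_actions M \<Gamma>) (leash_w M A I K \<Gamma>) U \<longleftrightarrow>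
             metric_open (mixing_actions M \<Gamma>) (leash_m M A I K \<Gamma>) U"
proof -
  interpret prob_space M by fact
  note A = assms(4) and dense = assms(6)
  have K: "\<And>i. i \<in> I \<Longrightarrow> compact (K i) \<and> K i \<noteq> {}"
    using assms(8) interior_subset by blast
  have \<Gamma>: "\<Gamma> \<noteq> {}"
    using assms(10) by auto
  have action: "is_action M T" and aut: "\<And>g. mp_aut M (T g)" if "T \<in> mixing_actions M \<Gamma>" for T
    using that action_mp_aut by (auto simp: mixing_actions_def)
  have w_le_m: "leash_w M A I K \<Gamma> T S \<le> 2 * leash_m M A I K \<Gamma> T S"
    if "T \<in> mixing_actions M \<Gamma>" "S \<in> mixing_actions M \<Gamma>" for T S
    by (rule leash_w_le_leash_m) (use A K \<Gamma> aut that in auto)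
  have m_by_w: "\<exists>\<delta>>0. \<forall>S\<in>mixing_actions M \<Gamma>. leash_w M A I K \<Gamma> T S < \<delta> \<longrightarrow> leash_m M A I K \<Gamma> T S < \<epsilon>"
    if T: "T \<in> mixing_actions M \<Gamma>" and \<epsilon>: "\<epsilon> > 0" for T \<epsilon>
  proof -
    have "\<exists>\<delta>>0. \<forall>S. (\<forall>g. mp_aut M (S g)) \<longrightarrow> leash_w M A I K \<Gamma> T S < \<delta> \<longrightarrow> leash_m M A I K \<Gamma> T S < \<epsilon>"
      by (rule leash_m_small_if_leash_w_small) (use A dense action[OF T] K \<Gamma> \<epsilon> in auto)
    then show ?thesis
      using aut by blast
  qed
  show ?thesis
    using metric_open_if_dominated[of 2 "mixing_actions M \<Gamma>" "leash_w M A I K \<Gamma>" "leash_m M A I K \<Gamma>"]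
      metric_open_transfer[of "mixing_actions M \<Gamma>" "leash_w M A I K \<Gamma>" "leash_m M A I K \<Gamma>"]
      w_le_m m_by_w by auto
qed

end
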